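(* For every integer $t \ge 2$, if $G$ is a connected chordal graph with no induced subgraph isomorphic to $K_t \bowtie \overline{K_t}$, then $\mathsf{lpt}(G) \le t-1$.
   Context: All graphs are finite and simple. A graph is chordal if it has no induced cycle of length at least four. For $n\in\mathbb{N}$, $K_n \bowtie \overline{K_n}$ denotes the graph on vertices $v_1^1,\dots,v_n^1,v_1^2,\dots,v_n^2$ in which $\{v_1^1,\dots,v_n^1\}$ is a clique, $\{v_1^2,\dots,v_n^2\}$ is an independent set, and $v_i^1$ is adjacent to $v_j^2$ if and only if $i=j$ (a clique and an independent set of size $n$ joined by a perfect matching). A longest path of a connected graph $G$ is a path of maximum length in $G$; a longest path transversal is a set of vertices meeting every longest path; $\mathsf{lpt}(G)$ is the minimum cardinality of a longest path transversal of $G$. *)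

theory Defs
  imports Main
begin

definition graph :: "'a set \<Rightarrow> ('a \<Rightarrow> 'a \<Rightarrow> bool) \<Rightarrow> bool" where
  "graph V E \<longleftrightarrow> finite V \<and> (\<forall>u v. E u v \<longrightarrow> u \<in> V \<and> v \<in> V)
     \<and> (\<forall>u v. E u v \<longrightarrow> E v u) \<and> (\<forall>v. \<not> E v v)"

definition is_path :: "'a set \<Rightarrow> ('a \<Rightarrow> 'a \<Rightarrow> bool) \<Rightarrow> 'a list \<Rightarrow> bool" where
  "is_path V E p \<longleftrightarrow> p \<noteq> [] \<and> distinct p \<and> set p \<subseteq> V
     \<and> (\<forall>i. Suc i < length p \<longrightarrow> E (p ! i) (p ! Suc i))"

definition path_length :: "'a list \<Rightarrow> nat" where
  "path_length p = length p - 1"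

definition connected_graph :: "'a set \<Rightarrow> ('a \<Rightarrow> 'a \<Rightarrow> bool) \<Rightarrow> bool" where
  "connected_graph V E \<longleftrightarrow> V \<noteq> {} \<and>
     (\<forall>u\<in>V. \<forall>v\<in>V. \<exists>p. is_path V E p \<and> hd p = u \<and> last p = v)"

text \<open>Chordal: no induced cycle of length at least four.\<close>
definition chordal :: "'a set \<Rightarrow> ('a \<Rightarrow> 'a \<Rightarrow> bool) \<Rightarrow> bool" where
  "chordal V E \<longleftrightarrow> \<not> (\<exists>c. length c \<ge> 4 \<and> distinct c \<and> set c \<subseteq> V \<and>
     (\<forall>i<length c. \<forall>j<length c.
        E (c ! i) (c ! j) \<longleftrightarrow> (j = Suc i mod length c \<or> i = Suc j mod length c)))"

definition longest_path :: "'a set \<Rightarrow> ('a \<Rightarrow> 'a \<Rightarrow> bool) \<Rightarrow> 'a list \<Rightarrow> bool" where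
  "longest_path V E p \<longleftrightarrow> is_path V E p \<and>
     (\<forall>q. is_path V E q \<longrightarrow> path_length q \<le> path_length p)"

definition lp_transversal :: "'a set \<Rightarrow> ('a \<Rightarrow> 'a \<Rightarrow> bool) \<Rightarrow> 'a set \<Rightarrow> bool" where
  "lp_transversal V E S \<longleftrightarrow> S \<subseteq> V \<and> (\<forall>p. longest_path V E p \<longrightarrow> set p \<inter> S \<noteq> {})"

definition lpt :: "'a set \<Rightarrow> ('a \<Rightarrow> 'a \<Rightarrow> bool) \<Rightarrow> nat" where
  "lpt V E = (LEAST k. \<exists>S. lp_transversal V E S \<and> card S = k)"

text \<open>G has an induced subgraph isomorphic to K_t joined to co-K_t by a perfect
  matching: clique vertices a 0..a (t-1), independent vertices b 0..b (t-1),
  all distinct, a i adjacent to b j iff i = j.\<close>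
definition has_induced_KtKt :: "'a set \<Rightarrow> ('a \<Rightarrow> 'a \<Rightarrow> bool) \<Rightarrow> nat \<Rightarrow> bool" where
  "has_induced_KtKt V E t \<longleftrightarrow> (\<exists>a b.
     inj_on a {..<t} \<and> inj_on b {..<t} \<and> a ` {..<t} \<inter> b ` {..<t} = {}
     \<and> a ` {..<t} \<subseteq> V \<and> b ` {..<t} \<subseteq> V
     \<and> (\<forall>i<t. \<forall>j<t. (E (a i) (a j) \<longleftrightarrow> i \<noteq> j) \<and> \<not> E (b i) (b j)
                     \<and> (E (a i) (b j) \<longleftrightarrow> i = j)))"

end

theory Submission
  imports Defs
begin

text \<open>
  Chordal graphs have simplicial vertices (Dirac), and deleting a simplicial vertex keeps
  connected vertex sets connected and pairwise touching sets touching; so by induction every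
  family of pairwise touching connected sets of a chordal graph is met by a single clique.
  Longest paths of a connected graph pairwise intersect, hence some clique meets all of them.
  Let K be such a clique of minimum size and suppose it has at least t vertices. For each v in K
  some longest path meets K only in v; the vertex after v on it (v cannot be its end, otherwise
  the path extends into K) is a neighbour b v of v that has no other neighbour in K, as it could
  otherwise be inserted into the path. Two such private neighbours are nonadjacent, since
  v, b v, b w, w would form an induced 4-cycle. So K and the b v contain an induced copy of
  K_t joined to co-K_t by a perfect matching.
\<close>

lemma is_path_iff_successively:
  "is_path X E p \<longleftrightarrow> p \<noteq> [] \<and> distinct p \<and> set p \<subseteq> X \<and> successively E p"
  unfolding is_path_def successively_conv_nth by auto

lemma is_path_edge: "is_path X E p \<Longrightarrow> Suc i < length p \<Longrightarrow> E (p!i) (p!Suc i)"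
  by (simp add: is_path_def)

lemma is_path_take: "is_path X E p \<Longrightarrow> 0 < k \<Longrightarrow> is_path X E (take k p)"
  unfolding is_path_iff_successively
  by (metis append_take_drop_id distinct_append le_sup_iff set_append successively_append_iff
      take_eq_Nil2 zero_less_iff_neq_zero)

lemma is_path_drop: "is_path X E p \<Longrightarrow> k < length p \<Longrightarrow> is_path X E (drop k p)"
  unfolding is_path_iff_successively
  by (metis append_take_drop_id distinct_append drop_eq_Nil2 le_sup_iff not_le set_append
      successively_append_iff)

lemma is_path_rev: "(\<And>u v. E u v \<Longrightarrow> E v u) \<Longrightarrow> is_path X E p \<Longrightarrow> is_path X E (rev p)"
  unfolding is_path_iff_successively by (auto elim: successively_mono)

lemma is_path_snoc:
  "is_path X E p \<Longrightarrow> w \<in> X \<Longrightarrow> w \<notin> set p \<Longrightarrow> E (last p) w \<Longrightarrow> is_path X E (p @ [w])"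
  by (auto simp: is_path_iff_successively successively_append_iff)

lemma is_path_glue:
  assumes p: "is_path X E p" and q: "is_path X E q"
    and shared: "last p = hd q" "set p \<inter> set q = {hd q}"
  shows "is_path X E (p @ tl q)"
proof -
  obtain x q' where "q = x # q'" using q by (cases q) (auto simp: is_path_def)
  then show ?thesis using p q shared unfolding is_path_iff_successively
    by (auto simp: successively_append_iff successively_Cons split: list.splits)
qed

lemma is_path_insert:
  assumes p: "is_path X E p" and i: "Suc i < length p" and w: "w \<in> X" "w \<notin> set p"
    and e: "E (p!i) w" "E w (p!Suc i)"
  shows "is_path X E (take (Suc i) p @ w # drop (Suc i) p)"
proof -
  have "set (take (Suc i) p) \<inter> set (drop (Suc i) p) = {}"
    using p by (intro set_take_disj_set_drop_if_distinct) (auto simp: is_path_def)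
  moreover have "successively E (take (Suc i) p)" "successively E (drop (Suc i) p)"
    using is_path_take[OF p, of "Suc i"] is_path_drop[OF p i]
    by (auto simp: is_path_iff_successively)
  moreover have "last (take (Suc i) p) = p!i"
    and drop: "drop (Suc i) p = p!Suc i # drop (Suc (Suc i)) p"
    using i by (simp_all add: take_Suc_conv_app_nth Cons_nth_drop_Suc)
  moreover have "p!Suc i \<notin> set (drop (Suc (Suc i)) p)"
    using distinct_drop[of p "Suc i"] p drop by (simp add: is_path_def)
  ultimately show ?thesis using p i w e
    by (auto simp: is_path_iff_successively successively_append_iff successively_Cons
        dest: in_set_takeD in_set_dropD)
qed

lemma is_path_shortcut:
  assumes p: "is_path X E p" and ij: "Suc i < j" "j < length p" and e: "E (p!i) (p!j)"
  shows "is_path X E (take (Suc i) p @ drop j p)"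
proof -
  have "set (take (Suc i) p) \<inter> set (drop j p) = {}"
    using p ij by (intro set_take_disj_set_drop_if_distinct) (auto simp: is_path_def)
  moreover have "successively E (take (Suc i) p)" "successively E (drop j p)"
    using is_path_take[OF p, of "Suc i"] is_path_drop[OF p ij(2)]
    by (auto simp: is_path_iff_successively)
  moreover have "last (take (Suc i) p) = p!i" "hd (drop j p) = p!j"
    using ij by (simp_all add: take_Suc_conv_app_nth hd_drop_conv_nth)
  ultimately show ?thesis using p ij e
    by (auto simp: is_path_iff_successively successively_append_iff
        dest: in_set_takeD in_set_dropD)
qed

lemma path_half:
  assumes sym: "\<And>u v. E u v \<Longrightarrow> E v u" and p: "is_path X E p" and i: "i < length p"
  shows "\<exists>A. is_path X E A \<and> set A \<subseteq> set p \<and> last A = p!i \<and> length p < 2 * length A"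
proof (cases "length p < 2 * Suc i")
  case True
  have "last (take (Suc i) p) = p!i" using i by (simp add: take_Suc_conv_app_nth)
  then show ?thesis using True i is_path_take[OF p, of "Suc i"]
    by (intro exI[of _ "take (Suc i) p"]) (auto dest: in_set_takeD)
next
  case False
  have "last (rev (drop i p)) = p!i" using i by (simp add: last_rev hd_drop_conv_nth)
  then show ?thesis using False i is_path_rev[OF sym is_path_drop[OF p i]]
    by (intro exI[of _ "rev (drop i p)"]) (auto dest: in_set_dropD)
qed

lemma longest_path_length_le:
  assumes "longest_path V E p" "is_path V E q"
  shows "length q \<le> length p"
proof -
  have "path_length q \<le> path_length p" "0 < length p" "0 < length q"
    using assms by (auto simp: longest_path_def is_path_def)
  then show ?thesis unfolding path_length_def by linarith
qed

text \<open>Note that \<^term>\<open>reach E S u u\<close> holds even if \<^term>\<open>u \<notin> S\<close>.\<close>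

definition reach :: "('a \<Rightarrow> 'a \<Rightarrow> bool) \<Rightarrow> 'a set \<Rightarrow> 'a \<Rightarrow> 'a \<Rightarrow> bool" where
  "reach E S = (\<lambda>x y. E x y \<and> x \<in> S \<and> y \<in> S)\<^sup>*\<^sup>*"

definition connected_set :: "('a \<Rightarrow> 'a \<Rightarrow> bool) \<Rightarrow> 'a set \<Rightarrow> bool" where
  "connected_set E S \<longleftrightarrow> S \<noteq> {} \<and> (\<forall>u\<in>S. \<forall>v\<in>S. reach E S u v)"

lemma reach_refl [simp]: "reach E S u u"
  by (simp add: reach_def)

lemma reach_trans: "reach E S u v \<Longrightarrow> reach E S v w \<Longrightarrow> reach E S u w"
  unfolding reach_def by (rule rtranclp_trans)

lemma reach_step: "reach E S u v \<Longrightarrow> E v w \<Longrightarrow> v \<in> S \<Longrightarrow> w \<in> S \<Longrightarrow> reach E S u w"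
  unfolding reach_def by (rule rtranclp.rtrancl_into_rtrancl) auto

lemma reach_edge: "E u v \<Longrightarrow> u \<in> S \<Longrightarrow> v \<in> S \<Longrightarrow> reach E S u v"
  using reach_step[of E S u u v] by simp

lemma reach_mono: "reach E S u v \<Longrightarrow> S \<subseteq> T \<Longrightarrow> reach E T u v"
  unfolding reach_def by (erule rtranclp_mono[THEN predicate2D, rotated]) auto

lemma reach_sym:
  assumes sym: "\<And>x y. E x y \<Longrightarrow> E y x" and "reach E S u v"
  shows "reach E S v u"
proof -
  have "(\<lambda>x y. E x y \<and> x \<in> S \<and> y \<in> S)\<inverse>\<inverse> = (\<lambda>x y. E x y \<and> x \<in> S \<and> y \<in> S)"
    using sym by blast
  moreover have "((\<lambda>x y. E x y \<and> x \<in> S \<and> y \<in> S)\<inverse>\<inverse>)\<^sup>*\<^sup>* v u"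
    using assms(2) unfolding reach_def by (rule rtranclp_converseI)
  ultimately show ?thesis unfolding reach_def by simp
qed

lemma reach_closed:
  assumes "reach E S u v" "u \<in> A" "\<And>x y. x \<in> A \<Longrightarrow> y \<in> S \<Longrightarrow> E x y \<Longrightarrow> y \<in> A"
  shows "v \<in> A"
  using assms(1) unfolding reach_def by (induction rule: rtranclp_induct) (use assms in auto)

lemma reach_first:
  assumes "reach E S u v" "u \<noteq> v"
  shows "\<exists>w\<in>S. E u w"
  using assms unfolding reach_def by (induction rule: converse_rtranclp_induct) auto

lemma reach_within_component:
  assumes "reach E S u v"
  shows "reach E {w. reach E S u w} u v"
  using assms[unfolded reach_def]
proof (induction rule: rtranclp_induct)
  case (step y z)
  then show ?case using reach_step[of E "{w. reach E S u w}" u y z]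
    by (simp add: reach_def rtranclp.rtrancl_into_rtrancl)
qed simp

lemma reach_path:
  assumes "reach E S u v"
  shows "\<exists>p. is_path (insert u S) E p \<and> hd p = u \<and> last p = v"
  using assms[unfolded reach_def]
proof (induction rule: rtranclp_induct)
  case base
  then show ?case by (intro exI[of _ "[u]"]) (auto simp: is_path_def)
next
  case (step y z)
  then obtain p where p: "is_path (insert u S) E p" "hd p = u" "last p = y" by blast
  show ?case
  proof (cases "z \<in> set p")
    case True
    then obtain i where i: "i < length p" "p!i = z" by (auto simp: in_set_conv_nth)
    then have "last (take (Suc i) p) = z" by (simp add: take_Suc_conv_app_nth)
    then show ?thesis using is_path_take[OF p(1), of "Suc i"] p
      by (intro exI[of _ "take (Suc i) p"]) simp
  next
    case False
    then have "is_path (insert u S) E (p @ [z])" using is_path_snoc[OF p(1)] p(3) step.hyps(2)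
      by blast
    then show ?thesis using p by (intro exI[of _ "p @ [z]"]) (auto simp: is_path_def hd_append)
  qed
qed

lemma path_reach:
  assumes p: "is_path X E p" and x: "x \<in> set p"
  shows "reach E (set p) (hd p) x"
proof -
  have "reach E (set p) (hd p) (p!i)" if "i < length p" for i
    using that
  proof (induction i)
    case 0
    then show ?case by (simp add: hd_conv_nth)
  next
    case (Suc i)
    then show ?case using is_path_edge[OF p] reach_step[of E "set p" "hd p" "p!i" "p!Suc i"]
      by simp
  qed
  then show ?thesis using x by (auto simp: in_set_conv_nth)
qed

definition chordless :: "('a \<Rightarrow> 'a \<Rightarrow> bool) \<Rightarrow> 'a list \<Rightarrow> bool" where
  "chordless E p \<longleftrightarrow> (\<forall>i<length p. \<forall>j<length p. E (p!i) (p!j) \<longleftrightarrow> (j = Suc i \<or> i = Suc j))"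

locale simple_graph =
  fixes V :: "'a set" and E :: "'a \<Rightarrow> 'a \<Rightarrow> bool"
  assumes graph: "graph V E"
begin

lemma sym: "E u v \<Longrightarrow> E v u"
  using graph by (auto simp: graph_def)

lemma irrefl: "\<not> E v v"
  using graph by (auto simp: graph_def)

lemma edge_in_V: "E u v \<Longrightarrow> u \<in> V" "E u v \<Longrightarrow> v \<in> V"
  using graph by (auto simp: graph_def)

lemma finite_V: "finite V"
  using graph by (auto simp: graph_def)

lemma reach_symmetric: "reach E S u v \<Longrightarrow> reach E S v u"
  by (rule reach_sym[of E, OF sym])

lemma connected_set_component: "connected_set E {v. reach E S x v}"
  unfolding connected_set_def
proof (intro conjI ballI)
  fix u v assume "u \<in> {v. reach E S x v}" "v \<in> {v. reach E S x v}"
  then have "reach E {v. reach E S x v} x u" "reach E {v. reach E S x v} x v"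
    using reach_within_component[of E S x] by simp_all
  then show "reach E {v. reach E S x v} u v" by (metis reach_trans reach_symmetric)
qed (auto intro: exI[of _ x])

lemma path_connected_set:
  assumes p: "is_path X E p"
  shows "connected_set E (set p)"
  unfolding connected_set_def
proof (intro conjI ballI)
  fix u v assume "u \<in> set p" "v \<in> set p"
  then have "reach E (set p) (hd p) u" "reach E (set p) (hd p) v" using path_reach[OF p] by auto
  then show "reach E (set p) u v" by (metis reach_trans reach_symmetric)
qed (use p in \<open>simp add: is_path_def\<close>)

lemma shortest_path_chordless:
  assumes "reach E X u v" "u \<in> X"
  shows "\<exists>p. is_path X E p \<and> hd p = u \<and> last p = v \<and> chordless E p"
proof -
  define P where "P p \<longleftrightarrow> is_path X E p \<and> hd p = u \<and> last p = v" for p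
  obtain p0 where "P p0" using reach_path[OF assms(1)] assms(2) by (auto simp: P_def insert_absorb)
  then obtain p where pP: "P p" and shortest: "\<And>q. P q \<Longrightarrow> length p \<le> length q"
    using ex_has_least_nat[of P p0 length] by blast
  have no_chord: False if ij: "Suc i < j" "j < length p" "E (p!i) (p!j)" for i j
  proof -
    let ?q = "take (Suc i) p @ drop j p"
    have "P ?q"
      using pP is_path_shortcut[of X E p i j] ij by (auto simp: P_def hd_append last_append)
    then show False using shortest[of ?q] ij by simp
  qed
  have "chordless E p"
    unfolding chordless_def
  proof (intro allI impI iffI)
    fix i j assume ij: "i < length p" "j < length p" "E (p!i) (p!j)"
    then have "i \<noteq> j" using irrefl by auto
    then show "j = Suc i \<or> i = Suc j" using no_chord[of i j] no_chord[of j i] ij sym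
      by (metis Suc_lessI linorder_neqE_nat)
  next
    fix i j assume "i < length p" "j < length p" "j = Suc i \<or> i = Suc j"
    then show "E (p!i) (p!j)" using is_path_edge[of X E p] pP sym[of "p!j" "p!i"]
      by (auto simp: P_def)
  qed
  then show ?thesis using pP by (auto simp: P_def)
qed

lemma chordless_three: "E x y \<Longrightarrow> E y z \<Longrightarrow> \<not> E x z \<Longrightarrow> chordless E [x, y, z]"
  using sym[of x y] sym[of y z] sym[of z x] irrefl[of x] irrefl[of y] irrefl[of z]
  by (auto simp: chordless_def less_Suc_eq numeral_3_eq_3)

end

section \<open>Simplicial vertices of chordal graphs\<close>

definition clique :: "('a \<Rightarrow> 'a \<Rightarrow> bool) \<Rightarrow> 'a set \<Rightarrow> bool" where
  "clique E K \<longleftrightarrow> (\<forall>u\<in>K. \<forall>v\<in>K. u \<noteq> v \<longrightarrow> E u v)"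

definition simplicial :: "('a \<Rightarrow> 'a \<Rightarrow> bool) \<Rightarrow> 'a set \<Rightarrow> 'a \<Rightarrow> bool" where
  "simplicial E W s \<longleftrightarrow> s \<in> W \<and> clique E {u\<in>W. E s u}"

text \<open>\<^term>\<open>A\<close> is a nonempty union of components of \<^term>\<open>W - C\<close>.\<close>

definition separated_side :: "('a \<Rightarrow> 'a \<Rightarrow> bool) \<Rightarrow> 'a set \<Rightarrow> 'a set \<Rightarrow> 'a set \<Rightarrow> bool" where
  "separated_side E W C A \<longleftrightarrow>
     A \<noteq> {} \<and> A \<subseteq> W - C \<and> (\<forall>a\<in>A. \<forall>u\<in>W - C. E a u \<longrightarrow> u \<in> A)"

lemma clique_subset: "clique E K \<Longrightarrow> K' \<subseteq> K \<Longrightarrow> clique E K'"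
  unfolding clique_def by blast

lemma component_separated_side:
  assumes "y \<in> W - C"
  shows "separated_side E W C {v. reach E (W - C) y v}"
  unfolding separated_side_def
proof (intro conjI ballI impI)
  fix b u assume "b \<in> {v. reach E (W - C) y v}" "u \<in> W - C" "E b u"
  then show "u \<in> {v. reach E (W - C) y v}"
    using reach_step[of E "W - C" y b u] reach_closed[of E "W - C" y b "W - C"] assms by auto
next
  show "{v. reach E (W - C) y v} \<subseteq> W - C" using assms reach_closed[of E "W - C" y _ "W - C"] by auto
qed (auto intro: exI[of _ y])

lemma simplicial_in_side:
  assumes side: "separated_side E W C A" and C: "clique E C"
    and dirac: "clique E (A \<union> C) \<or>
      (\<exists>a b. simplicial E (A \<union> C) a \<and> simplicial E (A \<union> C) b \<and> a \<noteq> b \<and> \<not> E a b)"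
  shows "\<exists>a\<in>A. simplicial E W a"
proof -
  obtain a where a: "a \<in> A" "simplicial E (A \<union> C) a"
  proof -
    obtain x where "x \<in> A" using side by (auto simp: separated_side_def)
    from dirac show thesis
    proof
      assume "clique E (A \<union> C)"
      then show thesis using that[OF \<open>x \<in> A\<close>] \<open>x \<in> A\<close>
        by (auto simp: simplicial_def clique_def)
    next
      assume "\<exists>a b. simplicial E (A \<union> C) a \<and> simplicial E (A \<union> C) b \<and> a \<noteq> b \<and> \<not> E a b"
      then show thesis using that C by (auto simp: simplicial_def clique_def)
    qed
  qed
  have "{u\<in>W. E a u} \<subseteq> {u\<in>A \<union> C. E a u}" using a(1) side by (auto simp: separated_side_def)
  then show ?thesis
    using a side by (auto simp: simplicial_def separated_side_def intro: clique_subset)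
qed

locale chordal_graph = simple_graph +
  assumes chordal: "chordal V E"
begin

lemma closing_vertex_sees_interior:
  assumes p: "is_path V E p" "chordless E p" "3 \<le> length p"
    and w: "w \<in> V" "w \<notin> set p" "E w (hd p)" "E w (last p)"
  shows "\<exists>x\<in>set p. x \<noteq> hd p \<and> x \<noteq> last p \<and> E w x"
proof (rule ccontr)
  assume "\<not> ?thesis"
  then have sees_ends: "E w (p!k) \<longleftrightarrow> k = 0 \<or> k = length p - 1" if "k < length p" for k
    using that p w nth_eq_iff_index_eq[of p k 0] nth_eq_iff_index_eq[of p k "length p - 1"]
    by (auto simp: is_path_def hd_conv_nth last_conv_nth)
  define c where "c = p @ [w]"
  have "E (c!i) (c!j) \<longleftrightarrow> (j = Suc i mod length c \<or> i = Suc j mod length c)"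
    if ij: "i < length c" "j < length c" for i j
  proof -
    have len: "length c = Suc (length p)" by (simp add: c_def)
    consider "i < length p" "j < length p" | "i = length p" "j < length p"
      | "i < length p" "j = length p" | "i = length p" "j = length p"
      using ij len by linarith
    then show ?thesis
    proof cases
      case 1
      then show ?thesis using p(2) by (simp add: c_def nth_append chordless_def len)
    next
      case 2
      then show ?thesis using sees_ends[of j] p(3) by (auto simp: c_def nth_append len)
    next
      case 3
      then show ?thesis using sees_ends[of i] p(3) sym[of w "p!i"] sym[of "p!i" w]
        by (auto simp: c_def nth_append len)
    next
      case 4
      then show ?thesis using irrefl p(3) by (auto simp: c_def nth_append len)
    qed
  qed
  moreover have "distinct c" "set c \<subseteq> V" "4 \<le> length c"
    using p w by (auto simp: c_def is_path_def)
  ultimately show False using chordal unfolding chordal_def by blast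
qed

lemma common_neighbours_clique:
  assumes A: "connected_set E A" "A \<subseteq> V" and y: "y \<notin> A" "\<forall>a\<in>A. \<not> E y a"
  shows "clique E {c. E y c \<and> (\<exists>a\<in>A. E a c)}"
  unfolding clique_def
proof (intro ballI impI, rule ccontr)
  fix c1 c2 assume c: "c1 \<in> {c. E y c \<and> (\<exists>a\<in>A. E a c)}" "c2 \<in> {c. E y c \<and> (\<exists>a\<in>A. E a c)}"
    "c1 \<noteq> c2" "\<not> E c1 c2"
  then obtain a1 a2 where a: "a1 \<in> A" "E a1 c1" "a2 \<in> A" "E a2 c2" by blast
  let ?X = "insert c1 (insert c2 A)"
  have "reach E ?X c1 a1" "reach E ?X a2 c2" using a sym[of a1 c1] by (auto intro: reach_edge)
  moreover have "reach E ?X a1 a2" using A a by (auto simp: connected_set_def intro: reach_mono)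
  ultimately have "reach E ?X c1 c2" by (metis reach_trans)
  then obtain p where p: "is_path ?X E p" "hd p = c1" "last p = c2" "chordless E p"
    using shortest_path_chordless by blast
  have "length p \<noteq> 0" "length p \<noteq> 1" "length p \<noteq> 2"
    using p c(3,4) by (auto simp: is_path_def hd_conv_nth last_conv_nth numeral_2_eq_2)
  then have "3 \<le> length p" by linarith
  moreover have "is_path V E p" using p(1) A(2) c edge_in_V by (auto simp: is_path_def)
  moreover have "y \<in> V" "y \<notin> set p" using c y p(1) irrefl edge_in_V by (auto simp: is_path_def)
  ultimately obtain x where "x \<in> set p" "x \<noteq> c1" "x \<noteq> c2" "E y x"
    using closing_vertex_sees_interior[of p y] p c by auto
  then show False using p(1) y by (auto simp: is_path_def)
qed

lemma clique_separator_exists: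
  assumes W: "W \<subseteq> V" and xy: "x \<in> W" "y \<in> W" "x \<noteq> y" "\<not> E x y"
  obtains A B C where "clique E C" "C \<subseteq> W" "separated_side E W C A" "separated_side E W C B"
    "x \<in> A" "y \<in> B" "A \<inter> B = {}"
proof -
  define D where "D = {u\<in>W. u \<noteq> y \<and> \<not> E y u}"
  define A where "A = {v. reach E D x v}"
  define C where "C = {c\<in>W. E y c \<and> (\<exists>a\<in>A. E a c)}"
  define B where "B = {v. reach E (W - C) y v}"
  have "x \<in> D" using xy sym by (auto simp: D_def)
  then have AD: "A \<subseteq> D" using reach_closed[of E D x _ D] by (auto simp: A_def)
  have xA: "x \<in> A" by (simp add: A_def)
  have "connected_set E A" unfolding A_def by (rule connected_set_component)
  moreover have "A \<subseteq> V" "y \<notin> A" "\<forall>a\<in>A. \<not> E y a" using AD W by (auto simp: D_def)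
  ultimately have "clique E {c. E y c \<and> (\<exists>a\<in>A. E a c)}" by (rule common_neighbours_clique)
  then have clique: "clique E C" by (rule clique_subset) (auto simp: C_def)
  have side_A: "separated_side E W C A"
    unfolding separated_side_def
  proof (intro conjI ballI impI)
    fix a u assume au: "a \<in> A" "u \<in> W - C" "E a u"
    then have "u \<noteq> y" using AD sym[of a u] by (auto simp: D_def)
    moreover have "\<not> E y u" using au by (auto simp: C_def)
    ultimately have "u \<in> D" using au by (simp add: D_def)
    then show "u \<in> A" using au AD reach_step[of E D x a u] by (auto simp: A_def)
  next
    show "A \<subseteq> W - C" using AD by (auto simp: C_def D_def)
  qed (use xA in blast)
  have "y \<in> W - C" using xy irrefl by (auto simp: C_def)
  then have side_B: "separated_side E W C B" unfolding B_def by (rule component_separated_side)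
  have "A \<inter> B = {}"
  proof (rule ccontr)
    assume "A \<inter> B \<noteq> {}"
    then obtain v where "v \<in> A" "reach E (W - C) y v" by (auto simp: B_def)
    from \<open>reach E (W - C) y v\<close> have "reach E (W - C) v y" by (rule reach_symmetric)
    then have "y \<in> A" using \<open>v \<in> A\<close> side_A reach_closed[of E "W - C" v y A]
      by (auto simp: separated_side_def)
    then show False using AD by (auto simp: D_def)
  qed
  with xA show thesis by (intro that[OF clique _ side_A side_B]) (auto simp: B_def C_def)
qed

lemma complete_or_two_simplicial:
  "W \<subseteq> V \<Longrightarrow>
    clique E W \<or> (\<exists>a b. simplicial E W a \<and> simplicial E W b \<and> a \<noteq> b \<and> \<not> E a b)"
proof (induction "card W" arbitrary: W rule: less_induct)
  case less
  show ?case
  proof (cases "clique E W")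
    case False
    then obtain x y where xy: "x \<in> W" "y \<in> W" "x \<noteq> y" "\<not> E x y" by (auto simp: clique_def)
    obtain A B C where C: "clique E C" "C \<subseteq> W"
      and sides: "separated_side E W C A" "separated_side E W C B"
      and "x \<in> A" "y \<in> B" "A \<inter> B = {}"
      by (rule clique_separator_exists[OF less.prems xy])
    have "finite W" using less.prems finite_V finite_subset by blast
    have "A \<union> C \<subset> W" "B \<union> C \<subset> W"
      using C(2) sides \<open>x \<in> A\<close> \<open>y \<in> B\<close> \<open>A \<inter> B = {}\<close> xy by (auto simp: separated_side_def)
    then have smaller: "card (A \<union> C) < card W" "card (B \<union> C) < card W"
      "A \<union> C \<subseteq> V" "B \<union> C \<subseteq> V"
      using \<open>finite W\<close> less.prems by (simp_all add: psubset_card_mono) blast+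
    obtain a where "a \<in> A" "simplicial E W a"
      using simplicial_in_side[OF sides(1) C(1) less.hyps[OF smaller(1,3)]] by blast
    moreover obtain b where "b \<in> B" "simplicial E W b"
      using simplicial_in_side[OF sides(2) C(1) less.hyps[OF smaller(2,4)]] by blast
    moreover have "\<not> E a b"
      using sides \<open>a \<in> A\<close> \<open>b \<in> B\<close> \<open>A \<inter> B = {}\<close> unfolding separated_side_def by blast
    ultimately show ?thesis using \<open>A \<inter> B = {}\<close> by blast
  qed simp
qed

lemma simplicial_exists:
  assumes "W \<subseteq> V" "W \<noteq> {}"
  shows "\<exists>s. simplicial E W s"
proof -
  obtain x where "x \<in> W" using assms(2) by blast
  from complete_or_two_simplicial[OF assms(1)] show ?thesis
  proof
    assume "clique E W"
    then have "simplicial E W x" using \<open>x \<in> W\<close> by (simp add: simplicial_def clique_subset)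
    then show ?thesis ..
  qed blast
qed

end

section \<open>A Helly property for connected sets\<close>

definition touching :: "('a \<Rightarrow> 'a \<Rightarrow> bool) \<Rightarrow> 'a set \<Rightarrow> 'a set \<Rightarrow> bool" where
  "touching E S T \<longleftrightarrow> (\<exists>u\<in>S. \<exists>v\<in>T. u = v \<or> E u v)"

context simple_graph
begin

lemma neighbour_in_connected_set:
  assumes "connected_set E S" "s \<in> S" "S \<noteq> {s}"
  shows "\<exists>w\<in>S - {s}. E s w"
proof -
  obtain u where "u \<in> S" "u \<noteq> s" using assms(2,3) by blast
  then have "reach E S s u" using assms(1,2) by (simp add: connected_set_def)
  then obtain w where "w \<in> S" "E s w" using reach_first \<open>u \<noteq> s\<close> by metis
  then show ?thesis using irrefl[of s] by blast
qed

lemma simplicial_closed_neighbourhood_clique: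
  "simplicial E W s \<Longrightarrow> clique E (insert s {u\<in>W. E s u})"
  unfolding simplicial_def clique_def using sym by blast

lemma chordless_path_avoids_simplicial:
  assumes p: "is_path X E p" "chordless E p" "X \<subseteq> W"
    and s: "simplicial E W s" "hd p \<noteq> s" "last p \<noteq> s"
  shows "s \<notin> set p"
proof
  assume "s \<in> set p"
  then obtain i where i: "i < length p" "p!i = s" by (auto simp: in_set_conv_nth)
  have "p \<noteq> []" using p(1) by (simp add: is_path_def)
  then have "p!0 \<noteq> s" "p!(length p - 1) \<noteq> s"
    using s(2,3) by (simp_all add: hd_conv_nth last_conv_nth)
  then have "i \<noteq> 0" "i \<noteq> length p - 1" using i(2) by metis+
  then have bounds: "i - 1 < length p" "Suc i < length p" "Suc (i - 1) = i" using i(1) by auto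
  have "E (p!(i - 1)) s" "E s (p!Suc i)"
    using is_path_edge[OF p(1), of "i - 1"] is_path_edge[OF p(1), of i] i(2) bounds by simp_all
  moreover have "p!(i - 1) \<noteq> p!Suc i"
    using p(1) bounds nth_eq_iff_index_eq[of p "i - 1" "Suc i"] by (auto simp: is_path_def)
  moreover have "set p \<subseteq> W" using p(1,3) by (auto simp: is_path_def)
  then have "p!(i - 1) \<in> W" "p!Suc i \<in> W" using bounds nth_mem by blast+
  ultimately have "E (p!(i - 1)) (p!Suc i)"
    using s(1) sym[of "p!(i - 1)" s] unfolding simplicial_def clique_def by blast
  then show False using p(2) bounds by (auto simp: chordless_def)
qed

lemma connected_set_remove_simplicial:
  assumes s: "simplicial E W s" and S: "S \<subseteq> W" "connected_set E S" "S - {s} \<noteq> {}"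
  shows "connected_set E (S - {s})"
  unfolding connected_set_def
proof (intro conjI ballI)
  fix u v assume uv: "u \<in> S - {s}" "v \<in> S - {s}"
  then have "reach E S u v" using S(2) by (simp add: connected_set_def)
  then obtain p where p: "is_path S E p" "hd p = u" "last p = v" "chordless E p"
    using shortest_path_chordless uv(1) by blast
  then have "set p \<subseteq> S - {s}"
    using chordless_path_avoids_simplicial[OF p(1,4) S(1) s] uv by (auto simp: is_path_def)
  moreover have "reach E (set p) u v"
    using path_reach[OF p(1), of v] p last_in_set[of p] by (auto simp: is_path_def)
  ultimately show "reach E (S - {s}) u v" by (rule reach_mono[rotated])
qed (use S(3) in blast)

lemma touching_remove_simplicial:
  assumes s: "simplicial E W s"
    and ST: "S \<subseteq> W" "T \<subseteq> W" "connected_set E S" "connected_set E T" "S \<noteq> {s}" "T \<noteq> {s}"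
    and touching: "touching E S T"
  shows "touching E (S - {s}) (T - {s})"
proof -
  obtain u v where uv: "u \<in> S" "v \<in> T" "u = v \<or> E u v" using touching by (auto simp: touching_def)
  show ?thesis
  proof (cases "u = s \<or> v = s")
    case True
    obtain w1 where w1: "w1 \<in> S - {s}" "E s w1"
      using neighbour_in_connected_set[OF ST(3) _ ST(5)] uv True irrefl sym by blast
    moreover obtain w2 where w2: "w2 \<in> T - {s}" "E s w2"
      using neighbour_in_connected_set[OF ST(4) _ ST(6)] uv True irrefl by blast
    moreover have "w1 = w2 \<or> E w1 w2"
      using s ST(1,2) w1 w2 unfolding simplicial_def clique_def by blast
    ultimately show ?thesis by (auto simp: touching_def)
  next
    case False
    then show ?thesis using uv by (auto simp: touching_def)
  qed
qed

lemma remove_simplicial_from_family: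
  assumes s: "simplicial E W s" and "{s} \<notin> F"
    and F: "\<forall>S\<in>F. S \<subseteq> W \<and> connected_set E S" "\<forall>S\<in>F. \<forall>T\<in>F. touching E S T"
  shows "\<forall>S\<in>(\<lambda>S. S - {s}) ` F. S \<subseteq> W - {s} \<and> connected_set E S"
    and "\<forall>S\<in>(\<lambda>S. S - {s}) ` F. \<forall>T\<in>(\<lambda>S. S - {s}) ` F. touching E S T"
proof -
  have "S - {s} \<subseteq> W - {s} \<and> connected_set E (S - {s})" if "S \<in> F" for S
  proof -
    have "S \<noteq> {}" using F(1) that by (simp add: connected_set_def)
    moreover have "S \<noteq> {s}" using \<open>{s} \<notin> F\<close> that by blast
    ultimately have "S - {s} \<noteq> {}" by blast
    then show ?thesis using F(1) that connected_set_remove_simplicial[OF s] by blast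
  qed
  then show "\<forall>S\<in>(\<lambda>S. S - {s}) ` F. S \<subseteq> W - {s} \<and> connected_set E S" by blast
  have "touching E (S - {s}) (T - {s})" if "S \<in> F" "T \<in> F" for S T
    using F that \<open>{s} \<notin> F\<close> touching_remove_simplicial[OF s] by metis
  then show "\<forall>S\<in>(\<lambda>S. S - {s}) ` F. \<forall>T\<in>(\<lambda>S. S - {s}) ` F. touching E S T" by blast
qed

end

lemma (in chordal_graph) helly_connected_sets:
  "W \<subseteq> V \<Longrightarrow> \<forall>S\<in>F. S \<subseteq> W \<and> connected_set E S \<Longrightarrow> \<forall>S\<in>F. \<forall>T\<in>F. touching E S T \<Longrightarrow>
    \<exists>K\<subseteq>W. clique E K \<and> (\<forall>S\<in>F. S \<inter> K \<noteq> {})"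
proof (induction "card W" arbitrary: W F rule: less_induct)
  case less
  show ?case
  proof (cases "W = {}")
    case True
    then have "F = {}" using less.prems(2) by (auto simp: connected_set_def)
    then show ?thesis by (auto simp: clique_def)
  next
    case False
    then obtain s where s: "simplicial E W s" using simplicial_exists less.prems(1) by blast
    show ?thesis
    proof (cases "{s} \<in> F")
      case True
      have "T \<inter> insert s {u\<in>W. E s u} \<noteq> {}" if "T \<in> F" for T
      proof -
        have "touching E {s} T" using less.prems(3) that True by blast
        then obtain v where "v \<in> T" "s = v \<or> E s v" by (auto simp: touching_def)
        then show ?thesis using less.prems(2) that by blast
      qed
      moreover have "insert s {u\<in>W. E s u} \<subseteq> W" using s by (simp add: simplicial_def)
      ultimately show ?thesis using simplicial_closed_neighbourhood_clique[OF s] by blast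
    next
      case False
      define F' where "F' = (\<lambda>S. S - {s}) ` F"
      have F': "\<forall>S\<in>F'. S \<subseteq> W - {s} \<and> connected_set E S" "\<forall>S\<in>F'. \<forall>T\<in>F'. touching E S T"
        unfolding F'_def by (rule remove_simplicial_from_family[OF s False less.prems(2,3)])+
      have "finite W" using less.prems(1) finite_V by (rule finite_subset)
      moreover have "s \<in> W" using s by (simp add: simplicial_def)
      ultimately have "card (W - {s}) < card W" by (rule card_Diff1_less)
      then obtain K where K: "K \<subseteq> W - {s}" "clique E K" "\<forall>S\<in>F'. S \<inter> K \<noteq> {}"
        using less.hyps[OF _ _ F'] less.prems(1) by blast
      have "(S - {s}) \<inter> K \<noteq> {}" if "S \<in> F" for S using that K(3) by (simp add: F'_def)
      then have "\<forall>S\<in>F. S \<inter> K \<noteq> {}" by blast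
      then show ?thesis using K(1,2) by (intro exI[of _ K]) blast
    qed
  qed
qed

section \<open>Longest paths\<close>

lemma shortest_connecting_path:
  assumes "connected_graph V E" "X \<subseteq> V" "Y \<subseteq> V" "X \<noteq> {}" "Y \<noteq> {}"
  shows "\<exists>r. is_path V E r \<and> set r \<inter> X = {hd r} \<and> set r \<inter> Y = {last r}"
proof -
  define R where "R r \<longleftrightarrow> is_path V E r \<and> hd r \<in> X \<and> last r \<in> Y" for r
  obtain x y where "x \<in> X" "y \<in> Y" using assms(4,5) by blast
  moreover have "x \<in> V" "y \<in> V" using calculation assms(2,3) by blast+
  then obtain r0 where "is_path V E r0" "hd r0 = x" "last r0 = y"
    using assms(1) unfolding connected_graph_def by blast
  ultimately have "R r0" by (simp add: R_def)
  then obtain r where r: "R r" and shortest: "\<And>r'. R r' \<Longrightarrow> length r \<le> length r'"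
    using ex_has_least_nat[of R r0 length] by blast
  have ne: "r \<noteq> []" using r by (simp add: R_def is_path_def)
  have only_hd: "l = 0" if "l < length r" "r!l \<in> X" for l
  proof (rule ccontr)
    assume "l \<noteq> 0"
    then have "R (drop l r)" using r that is_path_drop[of V E r l]
      by (simp add: R_def hd_drop_conv_nth last_drop)
    then show False using shortest[of "drop l r"] \<open>l \<noteq> 0\<close> that(1) by simp
  qed
  have only_last: "l = length r - 1" if "l < length r" "r!l \<in> Y" for l
  proof (rule ccontr)
    assume "l \<noteq> length r - 1"
    moreover have "last (take (Suc l) r) = r!l" using that(1) by (simp add: take_Suc_conv_app_nth)
    ultimately have "R (take (Suc l) r)" using r that is_path_take[of V E r "Suc l"]
      by (simp add: R_def)
    then show False using shortest[of "take (Suc l) r"] \<open>l \<noteq> length r - 1\<close> that(1) by simp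
  qed
  have "x \<in> {hd r}" if x: "x \<in> set r" "x \<in> X" for x
  proof -
    obtain l where "l < length r" "r!l = x" using x(1) by (auto simp: in_set_conv_nth)
    then show ?thesis using only_hd x(2) ne by (auto simp: hd_conv_nth)
  qed
  moreover have "y \<in> {last r}" if y: "y \<in> set r" "y \<in> Y" for y
  proof -
    obtain l where "l < length r" "r!l = y" using y(1) by (auto simp: in_set_conv_nth)
    then show ?thesis using only_last y(2) ne by (auto simp: last_conv_nth)
  qed
  ultimately show ?thesis using r ne by (auto simp: R_def)
qed

text \<open>
  If two longest paths were disjoint, the longer halves of both, joined through a shortest
  path between them, would form a longer path.
\<close>

lemma (in simple_graph) longest_paths_intersect:
  assumes conn: "connected_graph V E" and P: "longest_path V E P" and Q: "longest_path V E Q"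
  shows "set P \<inter> set Q \<noteq> {}"
proof
  assume disjoint: "set P \<inter> set Q = {}"
  have paths: "is_path V E P" "is_path V E Q" using P Q by (auto simp: longest_path_def)
  then have "set P \<subseteq> V" "set Q \<subseteq> V" "set P \<noteq> {}" "set Q \<noteq> {}" by (auto simp: is_path_def)
  then obtain r where r: "is_path V E r" "set r \<inter> set P = {hd r}" "set r \<inter> set Q = {last r}"
    using shortest_connecting_path[OF conn] by blast
  obtain x r' where "r = x # r'" using r(1) by (cases r) (auto simp: is_path_def)
  moreover have "hd r \<noteq> last r" using r disjoint by blast
  ultimately have "tl r \<noteq> []" "last r \<in> set (tl r)" by auto
  obtain i j where ij: "i < length P" "P!i = hd r" "j < length Q" "Q!j = last r"
    using r by (metis IntD2 in_set_conv_nth insertI1)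
  obtain A where A: "is_path V E A" "set A \<subseteq> set P" "last A = hd r" "length P < 2 * length A"
    using path_half[OF sym paths(1) ij(1)] ij(2) by metis
  obtain B' where B': "is_path V E B'" "set B' \<subseteq> set Q" "last B' = last r"
    "length Q < 2 * length B'"
    using path_half[OF sym paths(2) ij(3)] ij(4) by metis
  define B where "B = rev B'"
  have B: "is_path V E B" "set B \<subseteq> set Q" "hd B = last r" "length B = length B'"
    using B' is_path_rev[OF sym B'(1)] by (auto simp: B_def hd_rev)
  have "set A \<inter> set r = {hd r}" using A r(2) last_in_set[of A] by (auto simp: is_path_def)
  then have Ar: "is_path V E (A @ tl r)" using is_path_glue[OF A(1) r(1) A(3)] by blast
  have "set (tl r) \<subseteq> set r" "hd B \<in> set B"
    using r(1) B(1) by (auto simp: is_path_def intro: list.set_sel(2))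
  then have "set (A @ tl r) \<inter> set B = {hd B}"
    using A(2) B(2,3) r(3) disjoint \<open>last r \<in> set (tl r)\<close> by auto
  moreover have "last (A @ tl r) = hd B" using \<open>tl r \<noteq> []\<close> B(3) r(1)
    by (simp add: last_tl is_path_def)
  ultimately have "is_path V E (A @ tl r @ tl B)" using is_path_glue[OF Ar B(1)] by simp
  then have "length (A @ tl r @ tl B) \<le> length P" "length (A @ tl r @ tl B) \<le> length Q"
    using longest_path_length_le P Q by blast+
  moreover have "0 < length (tl r)" "0 < length B"
    using \<open>tl r \<noteq> []\<close> B(1) unfolding length_greater_0_conv by (auto simp: is_path_def)
  then have "length A + length B \<le> length (A @ tl r @ tl B)" by simp
  ultimately show False using A(4) B'(4) B(4) by linarith
qed

lemma (in chordal_graph) clique_lp_transversal_exists: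
  assumes "connected_graph V E"
  shows "\<exists>K. clique E K \<and> lp_transversal V E K"
proof -
  let ?F = "set ` {p. longest_path V E p}"
  have connected: "\<forall>S\<in>?F. S \<subseteq> V \<and> connected_set E S"
    using path_connected_set by (auto simp: longest_path_def is_path_def)
  have "touching E (set p) (set q)" if "longest_path V E p" "longest_path V E q" for p q
    using longest_paths_intersect[OF assms that] unfolding touching_def by blast
  then have "\<forall>S\<in>?F. \<forall>T\<in>?F. touching E S T" by blast
  then obtain K where "K \<subseteq> V" "clique E K" "\<forall>S\<in>?F. S \<inter> K \<noteq> {}"
    using helly_connected_sets[OF subset_refl connected] by blast
  then show ?thesis by (auto simp: lp_transversal_def)
qed

section \<open>Minimum clique transversals of longest paths\<close>

lemma (in simple_graph) private_neighbour:
  assumes K: "clique E K" "lp_transversal V E K" "v \<in> K" "K - {v} \<noteq> {}"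
    and not_transversal: "\<not> lp_transversal V E (K - {v})"
  shows "\<exists>b\<in>V - K. E v b \<and> (\<forall>w\<in>K - {v}. \<not> E b w)"
proof -
  have "K \<subseteq> V" using K(2) by (simp add: lp_transversal_def)
  then obtain p where p: "longest_path V E p" "set p \<inter> (K - {v}) = {}"
    using not_transversal by (auto simp: lp_transversal_def)
  have path: "is_path V E p" using p(1) by (simp add: longest_path_def)
  have "v \<in> set p" using K(2,3) p by (auto simp: lp_transversal_def)
  then obtain i where i: "i < length p" "p!i = v" by (auto simp: in_set_conv_nth)
  have outside: "w \<in> V" "w \<notin> set p" "E v w" if "w \<in> K - {v}" for w
    using that \<open>K \<subseteq> V\<close> p(2) K(1,3) by (auto simp: clique_def)
  have "Suc i < length p"
  proof (rule ccontr)
    assume "\<not> Suc i < length p"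
    then have "i = length p - 1" "p \<noteq> []" using i(1) by auto
    then have "last p = v" using i(2) by (simp add: last_conv_nth)
    obtain w where "w \<in> K - {v}" using K(4) by blast
    then have "is_path V E (p @ [w])" using is_path_snoc[OF path] outside \<open>last p = v\<close> by blast
    then show False using longest_path_length_le[OF p(1)] by fastforce
  qed
  define b where "b = p!Suc i"
  have "b \<in> set p" "b \<noteq> v" "E v b"
    using \<open>Suc i < length p\<close> i is_path_edge[OF path] path nth_eq_iff_index_eq[of p "Suc i" i]
    by (auto simp: b_def is_path_def)
  then have "b \<in> V - K" using path p(2) by (auto simp: is_path_def)
  moreover have "\<not> E b w" if "w \<in> K - {v}" for w
  proof
    assume "E b w"
    then have "is_path V E (take (Suc i) p @ w # drop (Suc i) p)"
      using is_path_insert[OF path \<open>Suc i < length p\<close>] outside[OF that] i sym[of b w]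
      by (simp add: b_def)
    then show False using longest_path_length_le[OF p(1)] \<open>Suc i < length p\<close> by fastforce
  qed
  ultimately show ?thesis using \<open>E v b\<close> by blast
qed

context chordal_graph
begin

text \<open>Otherwise \<^term>\<open>[w, v, bv, bw]\<close> would be an induced 4-cycle.\<close>

lemma private_neighbours_nonadjacent:
  assumes "E v w" "E v bv" "E w bw" "\<not> E bv w" "\<not> E bw v" "bv \<noteq> w" "bw \<noteq> v"
  shows "\<not> E bv bw"
proof
  assume "E bv bw"
  have "\<not> E w bv" using assms(4) sym[of w bv] by blast
  then have "chordless E [w, v, bv]" using chordless_three[OF sym[OF assms(1)] assms(2)] by blast
  moreover have "w \<noteq> v" "v \<noteq> bv" "bw \<noteq> w" "bw \<noteq> bv"
    using assms irrefl sym[of v bv] by blast+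
  then have "is_path V E [w, v, bv]" "bw \<in> V" "bw \<notin> set [w, v, bv]"
    using assms sym[of v w] edge_in_V[OF assms(1)] edge_in_V[OF assms(2)]
      edge_in_V(2)[OF assms(3)]
    by (auto simp: is_path_def less_Suc_eq)
  moreover have "E bw (hd [w, v, bv])" "E bw (last [w, v, bv])"
    using sym[OF assms(3)] sym[OF \<open>E bv bw\<close>] by simp_all
  ultimately show False using closing_vertex_sees_interior[of "[w, v, bv]" bw] assms(5) by auto
qed

lemma has_induced_KtKt_if_private_neighbours:
  assumes K: "clique E K" "K \<subseteq> V" "t \<le> card K"
    and b: "\<And>v. v \<in> K \<Longrightarrow> b v \<notin> K \<and> E v (b v) \<and> (\<forall>w\<in>K - {v}. \<not> E (b v) w)"
  shows "has_induced_KtKt V E t"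
proof -
  have "finite K" using K(2) finite_V finite_subset by blast
  then obtain a where a: "a ` {..<t} \<subseteq> K" "inj_on a {..<t}"
    using card_le_inj[of "{..<t}" K] K(3) by auto
  have b_nonadj: "\<not> E (a i) (b (a j))" if "i < t" "j < t" "i \<noteq> j" for i j
  proof -
    have "a i \<in> K - {a j}" using a that by (auto simp: inj_on_def)
    then show ?thesis using b[of "a j"] a(1) that sym[of "a i" "b (a j)"] by auto
  qed
  have "inj_on (b \<circ> a) {..<t}"
  proof (rule inj_onI, rule ccontr)
    fix i j assume "i \<in> {..<t}" "j \<in> {..<t}" "(b \<circ> a) i = (b \<circ> a) j" "i \<noteq> j"
    then show False using b_nonadj[of i j] b[of "a i"] a(1) by auto
  qed
  moreover have "a ` {..<t} \<inter> (b \<circ> a) ` {..<t} = {}" using a(1) b by fastforce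
  moreover have "(b \<circ> a) ` {..<t} \<subseteq> V" using a(1) b edge_in_V(2) by fastforce
  moreover have "(E (a i) (a j) \<longleftrightarrow> i \<noteq> j) \<and> \<not> E (b (a i)) (b (a j))
      \<and> (E (a i) (b (a j)) \<longleftrightarrow> i = j)" if "i < t" "j < t" for i j
  proof (cases "i = j")
    case True
    then show ?thesis using b a(1) that irrefl by auto
  next
    case False
    have "a i \<in> K" "a j \<in> K" "a i \<noteq> a j" using a that False by (auto simp: inj_on_def)
    then have "E (a i) (a j)" using K(1) by (simp add: clique_def)
    have bi: "b (a i) \<notin> K" "E (a i) (b (a i))" "\<not> E (b (a i)) (a j)"
      using b[of "a i"] \<open>a i \<in> K\<close> \<open>a j \<in> K\<close> \<open>a i \<noteq> a j\<close> by auto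
    have bj: "b (a j) \<notin> K" "E (a j) (b (a j))" "\<not> E (b (a j)) (a i)"
      using b[of "a j"] \<open>a i \<in> K\<close> \<open>a j \<in> K\<close> \<open>a i \<noteq> a j\<close> by auto
    have "\<not> E (b (a i)) (b (a j))"
      using bi(1) bj(1) \<open>a i \<in> K\<close> \<open>a j \<in> K\<close>
      by (intro private_neighbours_nonadjacent[OF \<open>E (a i) (a j)\<close> bi(2) bj(2) bi(3) bj(3)]) auto
    then show ?thesis using \<open>E (a i) (a j)\<close> b_nonadj[OF that False] False by simp
  qed
  ultimately show ?thesis unfolding has_induced_KtKt_def using a K(2)
    by (intro exI[of _ a] exI[of _ "b \<circ> a"]) auto
qed

lemma minimum_clique_transversal_small:
  assumes t: "2 \<le> t" "\<not> has_induced_KtKt V E t"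
    and K: "clique E K" "lp_transversal V E K"
    and minimum: "\<And>K'. clique E K' \<Longrightarrow> lp_transversal V E K' \<Longrightarrow> card K \<le> card K'"
  shows "card K < t"
proof (rule ccontr)
  assume "\<not> card K < t"
  have "K \<subseteq> V" using K(2) by (simp add: lp_transversal_def)
  then have "finite K" using finite_V finite_subset by blast
  have "\<exists>b\<in>V - K. E v b \<and> (\<forall>w\<in>K - {v}. \<not> E b w)" if "v \<in> K" for v
  proof (rule private_neighbour[OF K that])
    show "K - {v} \<noteq> {}"
    proof
      assume "K - {v} = {}"
      then have "K = {v}" using that by blast
      then show False using \<open>\<not> card K < t\<close> t(1) by simp
    qed
    show "\<not> lp_transversal V E (K - {v})"
      using minimum[of "K - {v}"] clique_subset[OF K(1)] card_Diff1_less[OF \<open>finite K\<close> that]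
      by fastforce
  qed
  then obtain b where "\<And>v. v \<in> K \<Longrightarrow> b v \<notin> K \<and> E v (b v) \<and> (\<forall>w\<in>K - {v}. \<not> E (b v) w)"
    by (metis DiffE)
  then have "has_induced_KtKt V E t"
    using \<open>\<not> card K < t\<close> by (intro has_induced_KtKt_if_private_neighbours[OF K(1) \<open>K \<subseteq> V\<close>]) auto
  then show False using t(2) by blast
qed

end

theorem theorem3p11:
  fixes V :: "'a set" and E :: "'a \<Rightarrow> 'a \<Rightarrow> bool" and t :: nat
  assumes "t \<ge> 2"
    and "graph V E"
    and "connected_graph V E"
    and "chordal V E"
    and "\<not> has_induced_KtKt V E t"
  shows "lpt V E \<le> t - 1"
proof -
  interpret chordal_graph V E using assms(2,4) by unfold_locales
  define CT where "CT = {K. clique E K \<and> lp_transversal V E K}"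
  obtain K0 where "K0 \<in> CT" using clique_lp_transversal_exists[OF assms(3)] by (auto simp: CT_def)
  then obtain K where K: "K \<in> CT" and minimum: "\<And>K'. K' \<in> CT \<Longrightarrow> card K \<le> card K'"
    using ex_has_least_nat[of "\<lambda>K. K \<in> CT" K0 card] by blast
  have "card K < t"
    using minimum_clique_transversal_small[OF assms(1,5)] K minimum by (auto simp: CT_def)
  moreover have "lpt V E \<le> card K" using K unfolding lpt_def CT_def by (auto intro: Least_le)
  ultimately show ?thesis by linarith
qed

end
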